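(* Let $(R,\mathfrak{m})$ be a finite local ring with residue field $\mathbb{F}_q$ and characteristic $p^N$. Consider a chain of subrings $R_{[\mathbb{F}_q]}=R_l\subseteq R_{l-1}\subseteq\cdots\subseteq R_1\subseteq R_0=R$. This chain is maximal (i.e. each $R_i$ is a maximal subring of $R_{i-1}$) if and only if $[R_{i-1}:R_i]=q$ for all $i=1,\dots,l$. Moreover, for such a maximal chain, $p^kR\subseteq R_k$ for every $k=0,1,\dots,l$.
   Context: All rings are commutative and unital. For a finite local ring $(R,\mathfrak{m})$ with residue field $\mathbb{F}_q$, $T(R)$ denotes the unique subgroup of $R^\times$ mapping isomorphically onto $\mathbb{F}_q^\times$ under reduction mod $\mathfrak{m}$ (Teichmuller units), and $R_{[\mathbb{F}_q]}$ denotes the $\mathbb{Z}/p^N\mathbb{Z}$-span of $T(R)$, which is the smallest subring of $R$ with residue field $\mathbb{F}_q$. Subrings of $R$ are local and their residue fields are naturally subfields of $\mathbb{F}_q$; indices are indices of additive groups. *)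

theory Defs
  imports Main "HOL-Computational_Algebra.Primes"
begin

text \<open>Rings are represented by a finite type of class comm_ring_1; R = UNIV.\<close>

definition is_ideal :: "'a::comm_ring_1 set \<Rightarrow> bool" where
  "is_ideal I \<longleftrightarrow> 0 \<in> I \<and> (\<forall>x\<in>I. \<forall>y\<in>I. x + y \<in> I) \<and> (\<forall>x\<in>I. - x \<in> I)
      \<and> (\<forall>r. \<forall>x\<in>I. r * x \<in> I)"

definition maximal_ideal :: "'a::comm_ring_1 set \<Rightarrow> bool" where
  "maximal_ideal M \<longleftrightarrow> is_ideal M \<and> M \<noteq> UNIV \<and>
      (\<forall>J. is_ideal J \<and> M \<subseteq> J \<longrightarrow> J = M \<or> J = UNIV)"

definition local_ring :: "'a::comm_ring_1 itself \<Rightarrow> bool" where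
  "local_ring _ \<longleftrightarrow> (\<exists>!M::'a set. maximal_ideal M)"

definition max_ideal :: "'a::comm_ring_1 set" where
  "max_ideal = (THE M. maximal_ideal M)"

definition is_subring :: "'a::comm_ring_1 set \<Rightarrow> bool" where
  "is_subring S \<longleftrightarrow> 1 \<in> S \<and> (\<forall>x\<in>S. \<forall>y\<in>S. x - y \<in> S \<and> x * y \<in> S)"

definition maximal_subring :: "'a::comm_ring_1 set \<Rightarrow> 'a set \<Rightarrow> bool" where
  "maximal_subring S T \<longleftrightarrow> is_subring S \<and> is_subring T \<and> S \<subset> T \<and>
      (\<forall>U. is_subring U \<and> S \<subseteq> U \<and> U \<subseteq> T \<longrightarrow> U = S \<or> U = T)"

definition add_index :: "'a set \<Rightarrow> 'a set \<Rightarrow> nat" where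
  "add_index A B = card A div card B"

text \<open>Teichmueller units: the unique subgroup of the unit group mapping
  isomorphically onto the units of the residue field under reduction mod m.\<close>
definition teichmuller :: "'a::comm_ring_1 set" where
  "teichmuller = (THE T.
      (\<forall>t\<in>T. t dvd 1) \<and> 1 \<in> T \<and> (\<forall>x\<in>T. \<forall>y\<in>T. x * y \<in> T) \<and>
      (\<forall>x\<in>T. \<exists>y\<in>T. x * y = 1) \<and>
      (\<forall>x\<in>T. \<forall>y\<in>T. x - y \<in> max_ideal \<longrightarrow> x = y) \<and>
      (\<forall>u. u \<notin> max_ideal \<longrightarrow> (\<exists>t\<in>T. u - t \<in> max_ideal)))"

text \<open>Z-span (equivalently Z/p^N-span) of a set.\<close>
definition int_span :: "'a::comm_ring_1 set \<Rightarrow> 'a set" where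
  "int_span A = {\<Sum>t\<in>F. of_int (c t) * t | F c. finite F \<and> F \<subseteq> A}"

definition teich_subring :: "'a::comm_ring_1 set" where
  "teich_subring = int_span teichmuller"

end

theory Submission
  imports Defs "HOL-Library.Cardinality" "HOL-Number_Theory.Number_Theory"
begin

text \<open>
  Write \<open>M\<close> for the maximal ideal and \<open>A\<close> for the Teichmueller units together with \<open>0\<close>.
  The Teichmueller set is \<open>{x\<^sup>E | x \<notin> M}\<close> for an exponent \<open>E\<close> with \<open>x\<^sup>E \<equiv> x\<close> on units
  and \<open>x\<^sup>E\<close> depending only on \<open>x\<close> mod \<open>M\<close>, so \<open>A\<close> is a set of \<open>q\<close> representatives of
  \<open>R/M\<close> whose nonzero differences are units. Subrings of a finite ring are closed under
  inverting their units, hence for a subring \<open>W \<supseteq> A\<close> and \<open>y \<notin> W\<close> the sums \<open>w + a y\<close>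
  (\<open>w \<in> W\<close>, \<open>a \<in> A\<close>) are pairwise distinct: a proper extension of \<open>W\<close> has index at least \<open>q\<close>.

  If \<open>S \<subset> T\<close> is maximal with \<open>A \<subseteq> S\<close>, nilpotency of \<open>M\<close> yields \<open>x \<in> (T \<inter> M) - S\<close> with
  \<open>x (T \<inter> M) \<subseteq> S\<close>. Maximality gives \<open>T = S + T x\<close>, and reducing coefficients mod \<open>M\<close> gives
  \<open>T = S + A x\<close>. So \<open>[T : S] = q\<close>, and \<open>p T \<subseteq> S\<close> because \<open>p \<in> M\<close>; iterating along the chain
  gives \<open>p\<^sup>k R \<subseteq> R\<^sub>k\<close>. Conversely, if \<open>[T : S] = q\<close>, an intermediate subring \<open>S \<subset> U \<subset> T\<close>
  would force \<open>[T : S] \<ge> q\<^sup>2 > q\<close>.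
\<close>

section \<open>Subrings\<close>

lemma is_subring_one: "is_subring S \<Longrightarrow> 1 \<in> S"
  unfolding is_subring_def by blast

lemma is_subring_diff: "is_subring S \<Longrightarrow> x \<in> S \<Longrightarrow> y \<in> S \<Longrightarrow> x - y \<in> S"
  unfolding is_subring_def by blast

lemma is_subring_mult: "is_subring S \<Longrightarrow> x \<in> S \<Longrightarrow> y \<in> S \<Longrightarrow> x * y \<in> S"
  unfolding is_subring_def by blast

lemma is_subring_zero: "is_subring S \<Longrightarrow> 0 \<in> S"
  using is_subring_diff[of S 1 1] is_subring_one[of S] by simp

lemma is_subring_uminus: "is_subring S \<Longrightarrow> x \<in> S \<Longrightarrow> - x \<in> S"
  using is_subring_diff[of S 0 x] is_subring_zero[of S] by simp

lemma is_subring_add: "is_subring S \<Longrightarrow> x \<in> S \<Longrightarrow> y \<in> S \<Longrightarrow> x + y \<in> S"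
  using is_subring_diff[of S x "- y"] is_subring_uminus[of S y] by simp

lemma is_subring_power: "is_subring S \<Longrightarrow> x \<in> S \<Longrightarrow> x ^ n \<in> S"
  by (induction n) (auto intro: is_subring_one is_subring_mult)

lemma is_subring_of_nat: "is_subring S \<Longrightarrow> of_nat n \<in> S"
  by (induction n) (auto intro: is_subring_zero is_subring_one is_subring_add)

lemma is_subring_add_mult:
  assumes S: "is_subring S" and T: "is_subring T" and "S \<subseteq> T" "x \<in> T"
  shows "is_subring {s + g * x | s g. s \<in> S \<and> g \<in> T}"
  unfolding is_subring_def
proof (intro conjI ballI)
  show "1 \<in> {s + g * x | s g. s \<in> S \<and> g \<in> T}"
    using is_subring_one[OF S] is_subring_zero[OF T] by force
next
  fix a b assume "a \<in> {s + g * x | s g. s \<in> S \<and> g \<in> T}" "b \<in> {s + g * x | s g. s \<in> S \<and> g \<in> T}"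
  then obtain s g s' g' where sg: "s \<in> S" "g \<in> T" "s' \<in> S" "g' \<in> T"
    and ab: "a = s + g * x" "b = s' + g' * x"
    by blast
  have "a - b = (s - s') + (g - g') * x" "a * b = s * s' + (s * g' + s' * g + g * g' * x) * x"
    using ab by (simp_all add: algebra_simps)
  moreover have "s - s' \<in> S" "g - g' \<in> T" "s * s' \<in> S" "s * g' + s' * g + g * g' * x \<in> T"
    using sg assms by (meson is_subring_diff is_subring_mult is_subring_add subsetD)+
  ultimately show "a - b \<in> {s + g * x | s g. s \<in> S \<and> g \<in> T}"
    and "a * b \<in> {s + g * x | s g. s \<in> S \<and> g \<in> T}"
    by blast+
qed

lemma maximal_subring_eq_add_mult:
  assumes "maximal_subring S T" "x \<in> T" "x \<notin> S"
  shows "{s + g * x | s g. s \<in> S \<and> g \<in> T} = T"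
proof -
  have S: "is_subring S" and T: "is_subring T" and "S \<subseteq> T"
    and between: "\<And>U. is_subring U \<Longrightarrow> S \<subseteq> U \<Longrightarrow> U \<subseteq> T \<Longrightarrow> U = S \<or> U = T"
    using assms(1) unfolding maximal_subring_def by auto
  let ?U = "{s + g * x | s g. s \<in> S \<and> g \<in> T}"
  have "S \<subseteq> ?U"
    using is_subring_zero[OF T] by force
  moreover have "?U \<subseteq> T"
    using \<open>S \<subseteq> T\<close> assms(2) by (auto intro!: is_subring_add[OF T] is_subring_mult[OF T])
  moreover have "x \<in> ?U"
    using is_subring_zero[OF S] is_subring_one[OF T] by force
  ultimately show ?thesis
    using between[OF is_subring_add_mult[OF S T \<open>S \<subseteq> T\<close> assms(2)]] assms(3) by blast
qed

lemma subset_int_span: "A \<subseteq> int_span A"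
proof
  fix a assume "a \<in> A"
  then have "a = (\<Sum>t\<in>{a}. of_int ((\<lambda>_. 1) t) * t) \<and> finite {a} \<and> {a} \<subseteq> A"
    by simp
  then have "\<exists>F c. a = (\<Sum>t\<in>F. of_int (c t) * t) \<and> finite F \<and> F \<subseteq> A"
    by (intro exI[of _ "{a}"] exI[of _ "\<lambda>_. 1"])
  then show "a \<in> int_span A"
    unfolding int_span_def by (simp only: mem_Collect_eq)
qed

lemma descending_chain_subset:
  fixes Rs :: "nat \<Rightarrow> 'a set"
  assumes "\<forall>i\<in>{1..l}. Rs i \<subseteq> Rs (i - 1)"
  shows "i \<le> j \<Longrightarrow> j \<le> l \<Longrightarrow> Rs j \<subseteq> Rs i"
proof (induction j)
  case 0
  then show ?case by simp
next
  case (Suc j)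
  show ?case
  proof (cases "i = Suc j")
    case False
    with Suc.prems have "Rs j \<subseteq> Rs i"
      by (intro Suc.IH) auto
    moreover from Suc.prems have "Suc j \<in> {1..l}"
      by simp
    with assms have "Rs (Suc j) \<subseteq> Rs j"
      by fastforce
    ultimately show ?thesis
      by blast
  qed simp
qed

section \<open>Finite rings\<close>

lemma is_unit_mult_left_cancel:
  fixes a b c :: "'a::comm_semiring_1"
  assumes "a dvd 1" and "a * b = a * c"
  shows "b = c"
proof -
  obtain v where "1 = a * v" using assms(1) by (rule dvdE)
  then have "b = v * (a * b)" "c = v * (a * c)"
    by (metis mult.assoc mult.commute mult_1)+
  with assms(2) show ?thesis by simp
qed

lemma finite_type_repeat:
  fixes f :: "nat \<Rightarrow> 'a::finite"
  obtains i j where "i < j" "j \<le> CARD('a)" "f i = f j"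
proof -
  have "\<not> inj_on f {0..CARD('a)}"
  proof
    assume "inj_on f {0..CARD('a)}"
    then have "card (f ` {0..CARD('a)}) = Suc CARD('a)" by (simp add: card_image)
    moreover have "card (f ` {0..CARD('a)}) \<le> CARD('a)" by (rule card_mono) auto
    ultimately show False by simp
  qed
  then obtain i j where "i \<le> CARD('a)" "j \<le> CARD('a)" "i \<noteq> j" "f i = f j"
    unfolding inj_on_def by auto
  then show ?thesis
    using that[of i j] that[of j i] by (cases "i < j") auto
qed

lemma unit_power_fact_card_eq_one:
  fixes x :: "'a::{comm_semiring_1,finite}"
  assumes "x dvd 1"
  shows "x ^ fact CARD('a) = 1"
proof -
  obtain i j where ij: "i < j" "j \<le> CARD('a)" "x ^ i = x ^ j"
    by (rule finite_type_repeat[of "\<lambda>i. x ^ i"])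
  have "x ^ i * x ^ (j - i) = x ^ i * 1"
    using ij by (metis le_add_diff_inverse less_imp_le_nat mult_1_right power_add)
  then have "x ^ (j - i) = 1"
    by (rule is_unit_mult_left_cancel[rotated]) (use dvd_power_same[OF assms, of i] in simp)
  moreover have "j - i dvd fact CARD('a)"
    using ij by (intro dvd_fact) auto
  ultimately show ?thesis
    by (auto elim!: dvdE simp: power_mult)
qed

lemma is_subring_inverse:
  fixes u :: "'a::{comm_ring_1,finite}"
  assumes "is_subring S" "u \<in> S" "u dvd 1"
  obtains v where "v \<in> S" "u * v = 1"
proof -
  have "u * u ^ (fact CARD('a) - 1) = u ^ fact CARD('a)"
    by (metis Suc_diff_1 fact_gt_zero power_Suc)
  then have "u * u ^ (fact CARD('a) - 1) = 1"
    using unit_power_fact_card_eq_one[OF assms(3)] by simp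
  moreover have "u ^ (fact CARD('a) - 1) \<in> S"
    using assms(1,2) by (rule is_subring_power)
  ultimately show ?thesis
    using that by blast
qed

lemma finite_proper_ideal_le_maximal_ideal:
  fixes I :: "'a::{comm_ring_1,finite} set"
  assumes "is_ideal I" "I \<noteq> UNIV"
  obtains J where "maximal_ideal J" "I \<subseteq> J"
proof -
  define C where "C = {J. is_ideal J \<and> I \<subseteq> J \<and> J \<noteq> UNIV}"
  have "I \<in> C"
    using assms by (simp add: C_def)
  then obtain J where "J \<in> C" "I \<subseteq> J" and J_max: "\<forall>J'\<in>C. J \<subseteq> J' \<longrightarrow> J = J'"
    using finite_has_maximal2[of C I] by auto
  have "maximal_ideal J"
    unfolding maximal_ideal_def
  proof (intro conjI allI impI)
    show "is_ideal J" "J \<noteq> UNIV"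
      using \<open>J \<in> C\<close> by (simp_all add: C_def)
    fix J' assume "is_ideal J' \<and> J \<subseteq> J'"
    with \<open>I \<subseteq> J\<close> J_max show "J' = J \<or> J' = UNIV"
      unfolding C_def by blast
  qed
  then show ?thesis
    using \<open>I \<subseteq> J\<close> by (rule that)
qed

section \<open>Finite local rings and Teichmueller representatives\<close>

definition teichmuller_set :: "'a::comm_ring_1 set \<Rightarrow> bool" where
  "teichmuller_set T \<longleftrightarrow> (\<forall>t\<in>T. t dvd 1) \<and> 1 \<in> T \<and> (\<forall>x\<in>T. \<forall>y\<in>T. x * y \<in> T) \<and>
      (\<forall>x\<in>T. \<exists>y\<in>T. x * y = 1) \<and>
      (\<forall>x\<in>T. \<forall>y\<in>T. x - y \<in> max_ideal \<longrightarrow> x = y) \<and>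
      (\<forall>u. u \<notin> max_ideal \<longrightarrow> (\<exists>t\<in>T. u - t \<in> max_ideal))"

lemma teichmuller_eq_The: "teichmuller = (THE T. teichmuller_set T)"
  unfolding teichmuller_def teichmuller_set_def ..

definition teichmuller_reps :: "'a::comm_ring_1 set" where
  "teichmuller_reps = insert 0 teichmuller"

context
  assumes local: "local_ring TYPE('a::{comm_ring_1,finite})"
begin

abbreviation M :: "'a set" where "M \<equiv> max_ideal"

lemma maximal_ideal_M: "maximal_ideal M"
  using local unfolding local_ring_def max_ideal_def by (rule theI')

lemma is_ideal_M: "is_ideal M" and M_neq_UNIV: "M \<noteq> UNIV"
  using maximal_ideal_M unfolding maximal_ideal_def by simp_all

lemma zero_mem_M: "0 \<in> M"
  using is_ideal_M unfolding is_ideal_def by blast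

lemma add_mem_M: "x \<in> M \<Longrightarrow> y \<in> M \<Longrightarrow> x + y \<in> M"
  using is_ideal_M unfolding is_ideal_def by blast

lemma uminus_mem_M: "x \<in> M \<Longrightarrow> - x \<in> M"
  using is_ideal_M unfolding is_ideal_def by blast

lemma diff_mem_M: "x \<in> M \<Longrightarrow> y \<in> M \<Longrightarrow> x - y \<in> M"
  using add_mem_M[of x "- y"] uminus_mem_M[of y] by simp

lemma mult_mem_M_left: "x \<in> M \<Longrightarrow> r * x \<in> M"
  using is_ideal_M unfolding is_ideal_def by blast

lemma mult_mem_M_right: "x \<in> M \<Longrightarrow> x * r \<in> M"
  using mult_mem_M_left[of x r] by (simp add: mult.commute)

lemma sum_mem_M: "(\<And>i. i \<in> A \<Longrightarrow> f i \<in> M) \<Longrightarrow> sum f A \<in> M"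
  by (induction A rule: infinite_finite_induct) (auto intro: zero_mem_M add_mem_M)

lemma mem_M_iff_not_unit: "x \<in> M \<longleftrightarrow> \<not> x dvd 1"
proof
  assume "x \<in> M"
  show "\<not> x dvd 1"
  proof
    assume "x dvd 1"
    then obtain y where "1 = x * y" by (rule dvdE)
    then have "r \<in> M" for r
      using mult_mem_M_right[OF \<open>x \<in> M\<close>, of "y * r"] by (simp add: mult.assoc[symmetric])
    with M_neq_UNIV show False by blast
  qed
next
  assume "\<not> x dvd 1"
  define I where "I = {r * x | r. True}"
  have "is_ideal I"
    unfolding is_ideal_def I_def
    by (auto, metis mult_zero_left, metis distrib_right, metis minus_mult_left, metis mult.assoc)
  moreover have "1 \<notin> I"
    using \<open>\<not> x dvd 1\<close> by (auto simp: I_def dvd_def mult.commute)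
  then have "I \<noteq> UNIV"
    by blast
  ultimately obtain J where "maximal_ideal J" "I \<subseteq> J"
    by (rule finite_proper_ideal_le_maximal_ideal)
  moreover have "J = M"
    using local \<open>maximal_ideal J\<close> maximal_ideal_M unfolding local_ring_def by blast
  moreover have "x \<in> I"
    unfolding I_def by (metis (mono_tags, lifting) mem_Collect_eq mult_1)
  ultimately show "x \<in> M" by blast
qed

lemma one_notin_M: "1 \<notin> M"
  by (simp add: mem_M_iff_not_unit)

lemma mult_notin_M: "x \<notin> M \<Longrightarrow> y \<notin> M \<Longrightarrow> x * y \<notin> M"
  using mult_dvd_mono[of x 1 y 1] by (simp add: mem_M_iff_not_unit)

lemma power_notin_M: "x \<notin> M \<Longrightarrow> x ^ n \<notin> M"
  by (induction n) (simp_all add: one_notin_M mult_notin_M)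

lemma one_minus_notin_M: "u \<in> M \<Longrightarrow> 1 - u \<notin> M"
  using add_mem_M[of "1 - u" u] one_notin_M by auto

lemma power_diff_mem_M: "x - y \<in> M \<Longrightarrow> x ^ n - y ^ n \<in> M"
  by (simp add: power_diff_sumr2 mult_mem_M_right)

lemma prod_list_mem_M: "ws \<noteq> [] \<Longrightarrow> set ws \<subseteq> M \<Longrightarrow> prod_list ws \<in> M"
  by (cases ws) (auto intro: mult_mem_M_right)

text \<open>Two of the partial products coincide, and a partial product fixed by a factor \<open>u \<in> M\<close>
  vanishes because \<open>1 - u\<close> is a unit.\<close>
lemma prod_list_M_eq_zero:
  assumes "set ws \<subseteq> M" "CARD('a) \<le> length ws"
  shows "prod_list ws = 0"
proof -
  obtain i j where ij: "i < j" "j \<le> CARD('a)" "prod_list (take i ws) = prod_list (take j ws)"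
    by (rule finite_type_repeat[of "\<lambda>i. prod_list (take i ws)"])
  define P where "P = prod_list (take i ws)"
  define u where "u = prod_list (take (j - i) (drop i ws))"
  have "take j ws = take i ws @ take (j - i) (drop i ws)"
    using ij(1) take_add[of i "j - i" ws] by simp
  then have "P * u = prod_list (take j ws)"
    by (simp add: P_def u_def)
  also have "\<dots> = P"
    using ij(3) by (simp add: P_def)
  finally have "P * u = P" .
  have "(1 - u) * P = P - P * u"
    by (simp add: algebra_simps)
  also have "\<dots> = (1 - u) * 0"
    using \<open>P * u = P\<close> by simp
  finally have "(1 - u) * P = (1 - u) * 0" .
  moreover have "u \<in> M"
    unfolding u_def using assms ij
    by (intro prod_list_mem_M) (auto dest: in_set_takeD in_set_dropD)
  then have "(1 - u) dvd 1"
    using one_minus_notin_M by (simp add: mem_M_iff_not_unit)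
  ultimately have "P = 0"
    using is_unit_mult_left_cancel by blast
  then show ?thesis
    unfolding P_def by (metis append_take_drop_id mult_zero_left prod_list.append)
qed

lemma of_nat_in_M_if_CHAR_eq_power:
  assumes "CHAR('a) = p ^ N"
  shows "of_nat p \<in> M"
proof (rule ccontr)
  assume "of_nat p \<notin> M"
  then have "of_nat (p ^ N) dvd (1 :: 'a)"
    using dvd_power_same[of "of_nat p :: 'a" 1 N] by (simp add: mem_M_iff_not_unit)
  then have "(0 :: 'a) dvd 1"
    by (simp add: assms[symmetric])
  then show False
    using zero_mem_M by (simp add: mem_M_iff_not_unit)
qed

context
  fixes E :: nat
  assumes power_E_mod_M: "\<And>x. x \<notin> M \<Longrightarrow> x ^ E - x \<in> M"
    and power_E_eq: "\<And>x y. x - y \<in> M \<Longrightarrow> x ^ E = y ^ E"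
begin

lemma mod_M_if_power_E_mod_M:
  assumes "x \<notin> M" "y \<notin> M" "x ^ E - y ^ E \<in> M"
  shows "x - y \<in> M"
proof -
  have "(x ^ E - y ^ E) - (x ^ E - x) + (y ^ E - y) \<in> M"
    using add_mem_M[OF diff_mem_M[OF assms(3) power_E_mod_M[OF assms(1)]] power_E_mod_M[OF assms(2)]] .
  then show ?thesis
    by (simp add: algebra_simps)
qed

lemma teichmuller_set_power_image: "teichmuller_set ((\<lambda>x. x ^ E) ` (- M))"
  unfolding teichmuller_set_def
proof (intro conjI ballI allI impI)
  fix t assume "t \<in> (\<lambda>x. x ^ E) ` (- M)"
  then obtain x where "x \<notin> M" "t = x ^ E" by blast
  then show "t dvd 1"
    using dvd_power_same[of x 1 E] by (simp add: mem_M_iff_not_unit)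
  obtain v where "x * v = 1"
    using \<open>x \<notin> M\<close> by (metis dvdE mem_M_iff_not_unit)
  then have "v \<notin> M"
    by (metis dvd_triv_right mem_M_iff_not_unit)
  moreover have "t * v ^ E = 1"
    using \<open>t = x ^ E\<close> \<open>x * v = 1\<close> by (simp add: power_mult_distrib[symmetric])
  ultimately show "\<exists>y\<in>(\<lambda>x. x ^ E) ` (- M). t * y = 1"
    by blast
next
  show "1 \<in> (\<lambda>x. x ^ E) ` (- M)"
    using one_notin_M by (auto intro!: image_eqI[of _ _ 1])
next
  fix t t' assume "t \<in> (\<lambda>x. x ^ E) ` (- M)" "t' \<in> (\<lambda>x. x ^ E) ` (- M)"
  then obtain x y where xy: "x \<notin> M" "y \<notin> M" "t = x ^ E" "t' = y ^ E" by blast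
  then show "t * t' \<in> (\<lambda>x. x ^ E) ` (- M)"
    using mult_notin_M by (auto intro!: image_eqI[of _ _ "x * y"] simp: power_mult_distrib)
  assume "t - t' \<in> M"
  with xy show "t = t'"
    using mod_M_if_power_E_mod_M power_E_eq by blast
next
  fix u assume "u \<notin> M"
  then have "u - u ^ E \<in> M"
    using uminus_mem_M[OF power_E_mod_M] by fastforce
  with \<open>u \<notin> M\<close> show "\<exists>t\<in>(\<lambda>x. x ^ E) ` (- M). u - t \<in> M"
    by blast
qed

lemma teichmuller_set_power_E_eq:
  assumes "teichmuller_set (T :: 'a set)" "t \<in> T"
  shows "t ^ E = t"
proof -
  have "t ^ n \<in> T" for n
    using assms unfolding teichmuller_set_def by (induction n) auto
  moreover have "t ^ E - t \<in> M"
    using assms by (intro power_E_mod_M) (simp add: teichmuller_set_def mem_M_iff_not_unit)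
  ultimately show ?thesis
    using assms unfolding teichmuller_set_def by blast
qed

lemma teichmuller_set_subset:
  assumes "teichmuller_set (T :: 'a set)" "teichmuller_set T'"
  shows "T \<subseteq> T'"
proof
  fix t assume "t \<in> T"
  then have "t \<notin> M"
    using assms(1) by (simp add: teichmuller_set_def mem_M_iff_not_unit)
  then obtain t' where "t' \<in> T'" "t - t' \<in> M"
    using assms(2) unfolding teichmuller_set_def by blast
  then have "t = t'"
    using teichmuller_set_power_E_eq assms \<open>t \<in> T\<close> power_E_eq by metis
  with \<open>t' \<in> T'\<close> show "t \<in> T'" by simp
qed

end

context
  fixes p :: nat
  assumes prime: "prime p" and p_in_M: "of_nat p \<in> M"
begin

lemma power_prime_diff_mod_M: "(x - y) ^ p - (x ^ p - y ^ p) \<in> M"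
proof -
  define f where "f k = of_nat (p choose k) * x ^ k * (- y) ^ (p - k)" for k
  have "p > 0"
    using prime by (simp add: prime_gt_0_nat)
  have "(x - y) ^ p = (x + (- y)) ^ p"
    by simp
  also have "\<dots> = (\<Sum>k\<le>p. f k)"
    unfolding f_def by (rule binomial_ring)
  also have "{..p} = insert p (insert 0 {1..<p})"
    using \<open>p > 0\<close> by auto
  also have "(\<Sum>k\<in>insert p (insert 0 {1..<p}). f k) = f p + (f 0 + (\<Sum>k\<in>{1..<p}. f k))"
    using \<open>p > 0\<close> by (simp add: sum.insert)
  finally have "(x - y) ^ p = x ^ p + ((- y) ^ p + (\<Sum>k\<in>{1..<p}. f k))"
    unfolding f_def by simp
  then have eq: "(x - y) ^ p - (x ^ p - y ^ p) = ((- y) ^ p + y ^ p) + (\<Sum>k\<in>{1..<p}. f k)"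
    by (simp add: algebra_simps)
  have "(- y) ^ p + y ^ p \<in> M"
  proof (cases "even p")
    case True
    with prime have "p = 2"
      unfolding prime_nat_iff by auto
    then show ?thesis
      using mult_mem_M_right[OF p_in_M, of "y ^ 2"] by simp
  qed (simp add: zero_mem_M)
  moreover have "f k \<in> M" if "k \<in> {1..<p}" for k
  proof -
    have "p dvd p choose k"
      using that prime by (intro dvd_choose_prime) auto
    then obtain d where "p choose k = p * d" by (rule dvdE)
    then have "f k = of_nat p * (of_nat d * x ^ k * (- y) ^ (p - k))"
      by (simp add: f_def algebra_simps)
    then show ?thesis
      using mult_mem_M_right[OF p_in_M] by simp
  qed
  ultimately show ?thesis
    unfolding eq by (blast intro: add_mem_M sum_mem_M)
qed

lemma power_prime_power_diff_mod_M: "(x - y) ^ (p ^ s) - (x ^ (p ^ s) - y ^ (p ^ s)) \<in> M"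
proof (induction s)
  case 0
  then show ?case by (simp add: zero_mem_M)
next
  case (Suc s)
  define a where "a = x ^ (p ^ s)"
  define b where "b = y ^ (p ^ s)"
  have "((x - y) ^ (p ^ s)) ^ p - (a - b) ^ p \<in> M"
    using Suc.IH unfolding a_def b_def by (rule power_diff_mem_M)
  moreover have "(a - b) ^ p - (a ^ p - b ^ p) \<in> M"
    by (rule power_prime_diff_mod_M)
  ultimately have "(((x - y) ^ (p ^ s)) ^ p - (a - b) ^ p) + ((a - b) ^ p - (a ^ p - b ^ p)) \<in> M"
    by (rule add_mem_M)
  then show ?case
    by (simp add: a_def b_def power_mult[symmetric] mult.commute algebra_simps)
qed

lemma power_prime_power_eq_one_imp_mod_M:
  assumes "z ^ (p ^ s) = 1"
  shows "z - 1 \<in> M"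
proof -
  have "(z - 1) ^ (p ^ s) - (z ^ (p ^ s) - 1 ^ (p ^ s)) \<in> M"
    by (rule power_prime_power_diff_mod_M)
  then have "(z - 1) ^ (p ^ s) \<in> M"
    using assms by simp
  then show ?thesis
    using power_notin_M by blast
qed

lemma power_prime_diff_factor:
  assumes "x - y \<in> M"
  obtains w where "w \<in> M" "x ^ p - y ^ p = (x - y) * w"
proof
  define w where "w = (\<Sum>i<p. y ^ (p - Suc i) * x ^ i)"
  show "x ^ p - y ^ p = (x - y) * w"
    unfolding w_def by (rule power_diff_sumr2)
  have "y ^ (p - Suc i) * x ^ i - x ^ (p - Suc i) * x ^ i \<in> M" for i
  proof -
    have "y ^ (p - Suc i) - x ^ (p - Suc i) \<in> M"
      using uminus_mem_M[OF assms] by (intro power_diff_mem_M) simp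
    then have "(y ^ (p - Suc i) - x ^ (p - Suc i)) * x ^ i \<in> M"
      by (rule mult_mem_M_right)
    then show ?thesis
      by (simp add: left_diff_distrib)
  qed
  then have "(\<Sum>i<p. y ^ (p - Suc i) * x ^ i - x ^ (p - Suc i) * x ^ i) \<in> M"
    by (rule sum_mem_M)
  then have "w - (\<Sum>i<p. x ^ (p - Suc i) * x ^ i) \<in> M"
    by (simp add: w_def sum_subtractf)
  moreover have "(\<Sum>i<p. x ^ (p - Suc i) * x ^ i) = of_nat p * x ^ (p - 1)"
    by (simp add: power_add[symmetric])
  then have "(\<Sum>i<p. x ^ (p - Suc i) * x ^ i) \<in> M"
    using mult_mem_M_right[OF p_in_M] by simp
  ultimately show "w \<in> M"
    using add_mem_M by fastforce
qed

lemma power_prime_power_diff_factor: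
  assumes "x - y \<in> M"
  shows "\<exists>ws. length ws = n \<and> set ws \<subseteq> M \<and> x ^ (p ^ n) - y ^ (p ^ n) = (x - y) * prod_list ws"
proof (induction n)
  case 0
  then show ?case by simp
next
  case (Suc n)
  then obtain ws where ws: "length ws = n" "set ws \<subseteq> M"
    and eq: "x ^ (p ^ n) - y ^ (p ^ n) = (x - y) * prod_list ws"
    by blast
  have "x ^ (p ^ n) - y ^ (p ^ n) \<in> M"
    unfolding eq using assms by (rule mult_mem_M_right)
  then obtain w where "w \<in> M" "(x ^ (p ^ n)) ^ p - (y ^ (p ^ n)) ^ p = (x ^ (p ^ n) - y ^ (p ^ n)) * w"
    by (rule power_prime_diff_factor)
  then have "x ^ (p ^ Suc n) - y ^ (p ^ Suc n) = (x - y) * prod_list (ws @ [w])"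
    by (simp add: eq power_mult[symmetric] mult.commute mult.left_commute)
  with ws \<open>w \<in> M\<close> show ?case
    by (intro exI[of _ "ws @ [w]"]) simp
qed

text \<open>The difference is \<open>x - y\<close> times \<open>|R|\<close> elements of \<open>M\<close>, and \<open>M\<close> is nil.\<close>
lemma power_prime_power_card_eq_if_mod_M:
  assumes "x - y \<in> M"
  shows "x ^ (p ^ CARD('a)) = y ^ (p ^ CARD('a))"
proof -
  obtain ws where "length ws = CARD('a)" "set ws \<subseteq> M"
    and eq: "x ^ (p ^ CARD('a)) - y ^ (p ^ CARD('a)) = (x - y) * prod_list ws"
    using power_prime_power_diff_factor[OF assms] by blast
  then have "prod_list ((x - y) # ws) = 0"
    using assms by (intro prod_list_M_eq_zero) auto
  then show ?thesis
    using eq by simp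
qed

text \<open>Write \<open>|R|! = p^s a\<close> with \<open>p\<close> not dividing \<open>a\<close>. Units satisfy \<open>x^a \<equiv> 1\<close> mod \<open>M\<close>,
  and \<open>E = (p^|R|)^\<phi>(a)\<close> is \<open>1\<close> mod \<open>a\<close> (Euler) and divisible by \<open>p^|R|\<close>.\<close>
lemma teichmuller_exponent_exists:
  obtains E :: nat
  where "\<And>x. x \<notin> M \<Longrightarrow> x ^ E - x \<in> M" and "\<And>x y. x - y \<in> M \<Longrightarrow> x ^ E = y ^ E"
proof -
  have "fact CARD('a) \<noteq> (0 :: nat)" "\<not> p dvd 1"
    using prime by (auto simp: prime_nat_iff)
  then obtain a where fact_eq: "fact CARD('a) = p ^ multiplicity p (fact CARD('a)) * a"
    and "\<not> p dvd a"
    by (rule multiplicity_decompose')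
  then have "a > 0"
    by (metis fact_nonzero gr0I mult_0_right)
  have unit_mod: "x ^ a - 1 \<in> M" if "x \<notin> M" for x
  proof -
    have "(x ^ a) ^ (p ^ multiplicity p (fact CARD('a))) = 1"
      using unit_power_fact_card_eq_one[of x] that fact_eq
      by (simp add: mem_M_iff_not_unit power_mult[symmetric] mult.commute)
    then show ?thesis
      by (rule power_prime_power_eq_one_imp_mod_M)
  qed
  define E where "E = (p ^ CARD('a)) ^ totient a"
  have "[E = 1] (mod a)"
    unfolding E_def using prime \<open>\<not> p dvd a\<close> by (intro euler_theorem) (simp add: prime_imp_coprime)
  moreover have "E > 0"
    using prime by (simp add: E_def prime_gt_0_nat)
  ultimately obtain k where E_eq: "E = Suc (a * k)"
    by (metis Suc_diff_1 cong_to_1_nat dvdE)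
  have "p ^ CARD('a) dvd E"
    unfolding E_def using \<open>a > 0\<close> by (simp add: dvd_power)
  show ?thesis
  proof (rule that)
    fix x :: 'a assume "x \<notin> M"
    have "x ^ E - x = x * ((x ^ a) ^ k - 1 ^ k)"
      by (simp add: E_eq power_mult algebra_simps)
    then show "x ^ E - x \<in> M"
      using power_diff_mem_M[OF unit_mod[OF \<open>x \<notin> M\<close>]] mult_mem_M_left by simp
  next
    fix x y :: 'a assume "x - y \<in> M"
    then show "x ^ E = y ^ E"
      using power_prime_power_card_eq_if_mod_M \<open>p ^ CARD('a) dvd E\<close>
      by (auto elim!: dvdE simp: power_mult)
  qed
qed

lemma ex1_teichmuller_set: "\<exists>!T :: 'a set. teichmuller_set T"
proof -
  obtain E where "\<And>x. x \<notin> M \<Longrightarrow> x ^ E - x \<in> M" "\<And>x y. x - y \<in> M \<Longrightarrow> x ^ E = y ^ E"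
    using teichmuller_exponent_exists by metis
  then show ?thesis
    using teichmuller_set_power_image teichmuller_set_subset by (intro ex_ex1I) (blast, blast)
qed

lemma teichmuller_set_teichmuller: "teichmuller_set (teichmuller :: 'a set)"
  unfolding teichmuller_eq_The by (rule theI'[OF ex1_teichmuller_set])

lemma teichmuller_notin_M: "t \<in> teichmuller \<Longrightarrow> t \<notin> M"
  using teichmuller_set_teichmuller by (simp add: teichmuller_set_def mem_M_iff_not_unit)

lemma teichmuller_reps_diff_notin_M:
  assumes "t \<in> teichmuller_reps" "t' \<in> teichmuller_reps" "t \<noteq> t'"
  shows "t - t' \<notin> M"
  using assms teichmuller_set_teichmuller teichmuller_notin_M uminus_mem_M[of "- t'"]
  unfolding teichmuller_reps_def teichmuller_set_def by auto

lemma teichmuller_reps_mod_M: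
  obtains t where "t \<in> teichmuller_reps" "x - t \<in> M"
  using teichmuller_set_teichmuller unfolding teichmuller_reps_def teichmuller_set_def
  by (metis diff_zero insertCI)

lemma card_teichmuller_reps_mult_M: "card (teichmuller_reps :: 'a set) * card M = CARD('a)"
proof -
  have "bij_betw (\<lambda>(t, z). t + z) (teichmuller_reps \<times> M) (UNIV :: 'a set)"
  proof (rule bij_betw_imageI)
    show "inj_on (\<lambda>(t, z). t + z) (teichmuller_reps \<times> M)"
    proof (rule inj_onI, clarify)
      fix t z t' z'
      assume t: "t \<in> teichmuller_reps" "t' \<in> teichmuller_reps"
        and z: "z \<in> M" "z' \<in> M" and eq: "t + z = t' + z'"
      then have "t - t' = z' - z"
        by (simp add: algebra_simps)
      with z have "t - t' \<in> M"
        by (simp add: diff_mem_M)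
      with t have "t = t'"
        using teichmuller_reps_diff_notin_M by blast
      with eq show "t = t' \<and> z = z'"
        by simp
    qed
    have "x \<in> (\<lambda>(t, z). t + z) ` (teichmuller_reps \<times> M)" for x :: 'a
    proof -
      obtain t where "t \<in> teichmuller_reps" "x - t \<in> M"
        by (rule teichmuller_reps_mod_M)
      then show ?thesis
        by (auto intro!: image_eqI[of _ _ "(t, x - t)"])
    qed
    then show "(\<lambda>(t, z). t + z) ` (teichmuller_reps \<times> M) = UNIV"
      by blast
  qed
  then show ?thesis
    using bij_betw_same_card card_cartesian_product by metis
qed

lemma card_div_card_M: "CARD('a) div card M = card (teichmuller_reps :: 'a set)"
proof -
  have "card M > 0"
    using zero_mem_M by (auto simp: card_gt_0_iff)
  then show ?thesis
    by (simp flip: card_teichmuller_reps_mult_M)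
qed

lemma two_le_card_teichmuller_reps: "2 \<le> card (teichmuller_reps :: 'a set)"
proof -
  have "{0, 1} \<subseteq> (teichmuller_reps :: 'a set)"
    using teichmuller_set_teichmuller by (auto simp: teichmuller_reps_def teichmuller_set_def)
  moreover have "(0 :: 'a) \<noteq> 1"
    using zero_mem_M one_notin_M by metis
  ultimately show ?thesis
    using card_mono[of teichmuller_reps "{0, 1 :: 'a}"] by simp
qed

lemma teichmuller_reps_subset_subring:
  "is_subring S \<Longrightarrow> teichmuller \<subseteq> S \<Longrightarrow> teichmuller_reps \<subseteq> S"
  unfolding teichmuller_reps_def using is_subring_zero by blast

section \<open>Subrings containing the Teichmueller units\<close>

lemma inj_on_subring_add_mult_teichmuller_reps:
  assumes W: "is_subring (W :: 'a set)" and "teichmuller \<subseteq> W" and "y \<notin> W"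
  shows "inj_on (\<lambda>(w, t). w + t * y) (W \<times> teichmuller_reps)"
proof (rule inj_onI, clarify)
  fix w t w' t'
  assume w: "w \<in> W" "w' \<in> W" and t: "t \<in> teichmuller_reps" "t' \<in> teichmuller_reps"
    and eq: "w + t * y = w' + t' * y"
  show "w = w' \<and> t = t'"
  proof (cases "t = t'")
    case True
    with eq show ?thesis by simp
  next
    case False
    have "t - t' \<in> W"
      using teichmuller_reps_subset_subring[OF W assms(2)] t by (auto intro: is_subring_diff[OF W])
    moreover have "(t - t') dvd 1"
      using teichmuller_reps_diff_notin_M[OF t False] by (simp add: mem_M_iff_not_unit)
    ultimately obtain v where "v \<in> W" "(t - t') * v = 1"
      using is_subring_inverse[OF W] by blast
    have "(t - t') * y = w' - w"
      using eq by (simp add: algebra_simps)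
    with w \<open>v \<in> W\<close> have "v * ((t - t') * y) \<in> W"
      by (simp add: W is_subring_mult is_subring_diff)
    moreover have "v * ((t - t') * y) = ((t - t') * v) * y"
      by (simp add: ac_simps)
    ultimately have "y \<in> W"
      using \<open>(t - t') * v = 1\<close> by simp
    with \<open>y \<notin> W\<close> show ?thesis ..
  qed
qed

lemma subring_psubset_card_mult_le:
  assumes W: "is_subring (W :: 'a set)" and V: "is_subring V" and "teichmuller \<subseteq> W" and "W \<subset> V"
  shows "card W * card (teichmuller_reps :: 'a set) \<le> card V"
proof -
  obtain y where "y \<in> V" "y \<notin> W"
    using \<open>W \<subset> V\<close> by blast
  have "(\<lambda>(w, t). w + t * y) ` (W \<times> teichmuller_reps) \<subseteq> V"
    using teichmuller_reps_subset_subring[OF W assms(3)] \<open>W \<subset> V\<close> \<open>y \<in> V\<close>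
    by (auto intro!: is_subring_add[OF V] is_subring_mult[OF V])
  then have "card ((\<lambda>(w, t). w + t * y) ` (W \<times> teichmuller_reps)) \<le> card V"
    by (intro card_mono) simp_all
  then show ?thesis
    using card_image[OF inj_on_subring_add_mult_teichmuller_reps[OF W assms(3) \<open>y \<notin> W\<close>]]
    by (simp add: card_cartesian_product)
qed

lemma maximal_subring_exists_M_elem:
  assumes "maximal_subring S T" "teichmuller \<subseteq> S"
  obtains x where "x \<in> T" "x \<in> M" "x \<notin> S"
proof -
  have S: "is_subring S" and T: "is_subring T" and "S \<subset> T"
    using assms(1) unfolding maximal_subring_def by auto
  have "T \<subseteq> S" if "T \<inter> M \<subseteq> S"
  proof
    fix g assume "g \<in> T"
    obtain t where "t \<in> teichmuller_reps" "g - t \<in> M"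
      by (rule teichmuller_reps_mod_M)
    then have "t \<in> S"
      using teichmuller_reps_subset_subring[OF S assms(2)] by blast
    with \<open>g \<in> T\<close> \<open>S \<subset> T\<close> have "g - t \<in> T"
      by (auto intro: is_subring_diff[OF T])
    with \<open>g - t \<in> M\<close> that have "g - t \<in> S"
      by blast
    with \<open>t \<in> S\<close> show "g \<in> S"
      using is_subring_add[OF S, of "g - t" t] by simp
  qed
  with \<open>S \<subset> T\<close> that show ?thesis
    by blast
qed

text \<open>Multiplying \<open>x\<^sub>0\<close> by elements of \<open>T \<inter> M\<close> while staying outside \<open>S\<close> must stop after
  fewer than \<open>|R|\<close> steps, because \<open>M\<close> is nil and \<open>0 \<in> S\<close>.\<close>
lemma exists_M_elem_mult_M_subset:
  assumes S: "is_subring (S :: 'a set)" and T: "is_subring T" and "x\<^sub>0 \<in> T" "x\<^sub>0 \<in> M" "x\<^sub>0 \<notin> S"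
  obtains x where "x \<in> T" "x \<in> M" "x \<notin> S" "\<And>j. j \<in> T \<Longrightarrow> j \<in> M \<Longrightarrow> x * j \<in> S"
proof (rule ccontr)
  assume "\<not> thesis"
  note conclude = that
  have none: "\<exists>j \<in> T \<inter> M. x * j \<notin> S" if "x \<in> T \<inter> M" "x \<notin> S" for x
    using that conclude \<open>\<not> thesis\<close> by blast
  have "\<exists>ws. length ws = n \<and> set ws \<subseteq> T \<inter> M \<and> x\<^sub>0 * prod_list ws \<in> T \<inter> M \<and> x\<^sub>0 * prod_list ws \<notin> S"
    for n
  proof (induction n)
    case 0
    with assms show ?case by simp
  next
    case (Suc n)
    then obtain ws where ws: "length ws = n" "set ws \<subseteq> T \<inter> M"
      and prod: "x\<^sub>0 * prod_list ws \<in> T \<inter> M" "x\<^sub>0 * prod_list ws \<notin> S"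
      by blast
    then obtain j where "j \<in> T \<inter> M" "x\<^sub>0 * prod_list ws * j \<notin> S"
      using none by blast
    moreover from this have "x\<^sub>0 * prod_list ws * j \<in> T \<inter> M"
      using prod by (auto intro: is_subring_mult[OF T] mult_mem_M_right)
    ultimately show ?case
      using ws by (intro exI[of _ "ws @ [j]"]) (auto simp: mult.assoc)
  qed
  then obtain ws where "length ws = CARD('a)" "set ws \<subseteq> M" "x\<^sub>0 * prod_list ws \<notin> S"
    by blast
  moreover from this have "prod_list (x\<^sub>0 # ws) = 0"
    using \<open>x\<^sub>0 \<in> M\<close> by (intro prod_list_M_eq_zero) auto
  ultimately show False
    using is_subring_zero[OF S] by simp
qed

lemma maximal_subring_decomposition:
  assumes "maximal_subring S T" "teichmuller \<subseteq> S"
  shows "\<exists>x \<in> T \<inter> M. x \<notin> S \<and> (\<forall>j \<in> T \<inter> M. x * j \<in> S)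
    \<and> T = (\<lambda>(s, t). s + t * x) ` (S \<times> teichmuller_reps)"
proof -
  have S: "is_subring S" and T: "is_subring T" and "S \<subseteq> T"
    using assms(1) unfolding maximal_subring_def by auto
  have reps: "teichmuller_reps \<subseteq> S"
    using S assms(2) by (rule teichmuller_reps_subset_subring)
  obtain x\<^sub>0 where "x\<^sub>0 \<in> T" "x\<^sub>0 \<in> M" "x\<^sub>0 \<notin> S"
    using assms by (rule maximal_subring_exists_M_elem)
  then obtain x where x: "x \<in> T" "x \<in> M" "x \<notin> S" and xj: "\<And>j. j \<in> T \<Longrightarrow> j \<in> M \<Longrightarrow> x * j \<in> S"
    using exists_M_elem_mult_M_subset[OF S T] by metis
  have "T \<subseteq> (\<lambda>(s, t). s + t * x) ` (S \<times> teichmuller_reps)"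
  proof
    fix y assume "y \<in> T"
    then obtain s g where "s \<in> S" "g \<in> T" "y = s + g * x"
      using maximal_subring_eq_add_mult[OF assms(1) x(1,3)] by blast
    obtain t where "t \<in> teichmuller_reps" "g - t \<in> M"
      by (rule teichmuller_reps_mod_M)
    with \<open>g \<in> T\<close> reps \<open>S \<subseteq> T\<close> have "x * (g - t) \<in> S"
      by (auto intro: xj is_subring_diff[OF T])
    with \<open>s \<in> S\<close> have "s + x * (g - t) \<in> S"
      by (rule is_subring_add[OF S])
    moreover have "y = (s + x * (g - t)) + t * x"
      using \<open>y = s + g * x\<close> by (simp add: algebra_simps)
    ultimately show "y \<in> (\<lambda>(s, t). s + t * x) ` (S \<times> teichmuller_reps)"
      using \<open>t \<in> teichmuller_reps\<close> by force
  qed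
  moreover have "(\<lambda>(s, t). s + t * x) ` (S \<times> teichmuller_reps) \<subseteq> T"
    using reps \<open>S \<subseteq> T\<close> x(1) by (auto intro!: is_subring_add[OF T] is_subring_mult[OF T])
  ultimately show ?thesis
    using x xj by blast
qed

lemma card_maximal_subring:
  assumes "maximal_subring S (T :: 'a set)" "teichmuller \<subseteq> S"
  shows "card T = card S * card (teichmuller_reps :: 'a set)"
proof -
  obtain x where "x \<notin> S" and T_eq: "T = (\<lambda>(s, t). s + t * x) ` (S \<times> teichmuller_reps)"
    using maximal_subring_decomposition[OF assms] by blast
  have "is_subring S"
    using assms(1) unfolding maximal_subring_def by blast
  then show ?thesis
    using card_image[OF inj_on_subring_add_mult_teichmuller_reps] assms(2) \<open>x \<notin> S\<close> T_eq
    by (simp add: card_cartesian_product)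
qed

lemma of_nat_prime_mult_mem_maximal_subring:
  assumes "maximal_subring S (T :: 'a set)" "teichmuller \<subseteq> S" "y \<in> T"
  shows "of_nat p * y \<in> S"
proof -
  have S: "is_subring S" and T: "is_subring T"
    using assms(1) unfolding maximal_subring_def by auto
  obtain x where xj: "\<forall>j \<in> T \<inter> M. x * j \<in> S"
    and T_eq: "T = (\<lambda>(s, t). s + t * x) ` (S \<times> teichmuller_reps)"
    using maximal_subring_decomposition[OF assms(1,2)] by blast
  obtain s t where "s \<in> S" "t \<in> teichmuller_reps" "y = s + t * x"
    using assms(3) unfolding T_eq by auto
  have "x * of_nat p \<in> S"
    using xj is_subring_of_nat[OF T] p_in_M by blast
  moreover have "t \<in> S"
    using teichmuller_reps_subset_subring[OF S assms(2)] \<open>t \<in> teichmuller_reps\<close> by blast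
  ultimately have "of_nat p * s + t * (x * of_nat p) \<in> S"
    using \<open>s \<in> S\<close> is_subring_of_nat[OF S] is_subring_add[OF S] is_subring_mult[OF S] by blast
  moreover have "of_nat p * y = of_nat p * s + t * (x * of_nat p)"
    using \<open>y = s + t * x\<close> by (simp add: algebra_simps)
  ultimately show ?thesis
    by simp
qed

lemma maximal_subring_if_index:
  assumes S: "is_subring S" and T: "is_subring (T :: 'a set)" and "S \<subseteq> T" and "teichmuller \<subseteq> S"
    and index: "card T div card S = card (teichmuller_reps :: 'a set)"
  shows "maximal_subring S T"
proof -
  define q where "q = card (teichmuller_reps :: 'a set)"
  have "q \<ge> 2"
    unfolding q_def by (rule two_le_card_teichmuller_reps)
  have "card S > 0"
    using is_subring_one[OF S] by (auto simp: card_gt_0_iff)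
  then have "card T mod card S < card S"
    by simp
  moreover have "card S * q + card T mod card S = card T"
    using index div_mult_mod_eq[of "card T" "card S"] by (simp add: q_def mult.commute)
  ultimately have "card T < card S * (q + 1)"
    by (simp add: distrib_left)
  have "S \<noteq> T"
  proof
    assume "S = T"
    with \<open>card S > 0\<close> have "card T div card S = 1"
      by (metis div_self neq0_conv)
    with index \<open>q \<ge> 2\<close> show False
      by (simp add: q_def)
  qed
  moreover have "U = S \<or> U = T" if U: "is_subring U" "S \<subseteq> U" "U \<subseteq> T" for U
  proof (rule ccontr)
    assume "\<not> (U = S \<or> U = T)"
    with U have "card S * q \<le> card U" "card U * q \<le> card T"
      using subring_psubset_card_mult_le S T \<open>teichmuller \<subseteq> S\<close> unfolding q_def by blast+
    then have "card S * (q * q) \<le> card T"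
      by (metis mult.assoc mult_le_mono1 order_trans)
    moreover have "q + 1 \<le> q * q"
      using mult_le_mono1[OF \<open>q \<ge> 2\<close>, of q] \<open>q \<ge> 2\<close> by linarith
    ultimately show False
      using \<open>card T < card S * (q + 1)\<close> mult_le_mono2[of "q + 1" "q * q" "card S"] by linarith
  qed
  ultimately show ?thesis
    unfolding maximal_subring_def using S T \<open>S \<subseteq> T\<close> by blast
qed

lemma maximal_subring_iff_index:
  assumes "is_subring S" "is_subring (T :: 'a set)" "S \<subseteq> T" "teichmuller \<subseteq> S"
  shows "maximal_subring S T \<longleftrightarrow> card T div card S = card (teichmuller_reps :: 'a set)"
proof
  assume "maximal_subring S T"
  moreover have "card S > 0"
    using is_subring_one[OF assms(1)] by (auto simp: card_gt_0_iff)
  ultimately show "card T div card S = card (teichmuller_reps :: 'a set)"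
    using card_maximal_subring assms(4) by simp
next
  assume "card T div card S = card (teichmuller_reps :: 'a set)"
  with assms show "maximal_subring S T"
    by (intro maximal_subring_if_index)
qed

lemma of_nat_prime_power_mult_mem_maximal_chain:
  assumes "Rs 0 = UNIV" and "\<forall>i\<in>{1..l}. maximal_subring (Rs i) (Rs (i - 1))"
    and "\<forall>i\<le>l. teichmuller \<subseteq> Rs i" and "k \<le> l"
  shows "of_nat (p ^ k) * (x :: 'a) \<in> Rs k"
  using \<open>k \<le> l\<close>
proof (induction k)
  case 0
  with assms(1) show ?case by simp
next
  case (Suc k)
  then have "Suc k \<in> {1..l}"
    by simp
  with assms(2) have "maximal_subring (Rs (Suc k)) (Rs k)"
    by fastforce
  moreover have "of_nat (p ^ k) * x \<in> Rs k"
    using Suc by simp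
  ultimately have "of_nat p * (of_nat (p ^ k) * x) \<in> Rs (Suc k)"
    using of_nat_prime_mult_mem_maximal_subring assms(3) Suc.prems by blast
  then show ?case
    by (simp add: mult.assoc)
qed

end

end

theorem proposition34:
  fixes Rs :: "nat \<Rightarrow> 'a::{comm_ring_1, finite} set"
    and l p N q :: nat
  assumes "local_ring TYPE('a)"
    and "q = card (UNIV :: 'a set) div card (max_ideal :: 'a set)"
    and "prime p" and "CHAR('a) = p ^ N"
    and "Rs 0 = UNIV" and "Rs l = teich_subring"
    and "\<forall>i\<le>l. is_subring (Rs i)"
    and "\<forall>i\<in>{1..l}. Rs i \<subseteq> Rs (i - 1)"
  shows "((\<forall>i\<in>{1..l}. maximal_subring (Rs i) (Rs (i - 1)))
            \<longleftrightarrow> (\<forall>i\<in>{1..l}. add_index (Rs (i - 1)) (Rs i) = q))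
       \<and> ((\<forall>i\<in>{1..l}. maximal_subring (Rs i) (Rs (i - 1)))
            \<longrightarrow> (\<forall>k\<le>l. \<forall>x. of_nat (p ^ k) * x \<in> Rs k))"
proof -
  note local = assms(1) and prime = assms(3)
  have p_in_M: "of_nat p \<in> (max_ideal :: 'a set)"
    using local assms(4) by (rule of_nat_in_M_if_CHAR_eq_power)
  have q: "q = card (teichmuller_reps :: 'a set)"
    using assms(2) card_div_card_M[OF local prime p_in_M] by simp
  have teichmuller: "\<forall>i\<le>l. teichmuller \<subseteq> Rs i"
    using subset_int_span[of teichmuller] descending_chain_subset[OF assms(8)] assms(6)
    unfolding teich_subring_def by blast
  have "maximal_subring (Rs i) (Rs (i - 1)) \<longleftrightarrow> add_index (Rs (i - 1)) (Rs i) = q"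
    if "i \<in> {1..l}" for i
    unfolding add_index_def q using that assms(7,8) teichmuller
    by (intro maximal_subring_iff_index[OF local prime p_in_M]) auto
  then show ?thesis
    using of_nat_prime_power_mult_mem_maximal_chain[OF local prime p_in_M assms(5) _ teichmuller]
    by blast
qed

end
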